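(* Let $n\to\infty$, $N=N(n)$ and $p=p(n)$ satisfy $np\ge \left(\log\frac Nn\right)/6$ and $N\ge 3n$. Then asymptotically almost surely, for every two disjoint sets $S,T\subseteq[N]$ with $|S|=|T|=n$, the number of edges of $G\sim G(N,p)$ contained in $S\cup T$ and having at least one endpoint in $S$ is at most $18n^2p$.
   Context: $G(N,p)$ denotes the Erdős–Rényi random graph on vertex set $[N]$ in which each pair is an edge independently with probability $p$. All logarithms are natural. "Asymptotically almost surely" means with probability tending to $1$ as $n\to\infty$. *)

theory Defs
  imports "HOL-Probability.Probability"
begin

text \<open>Potential edges of a graph on vertex set [N] = {1..N}, as ordered pairs (i,j) with i < j.\<close>
definition pairs :: "nat \<Rightarrow> (nat \<times> nat) set" where
  "pairs N = {(i,j). 1 \<le> i \<and> i < j \<and> j \<le> N}"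

text \<open>Erdos-Renyi random graph G(N,p): each pair independently an edge with probability p.
  A graph is represented by its edge indicator on pairs (False outside pairs N).\<close>
definition gnp :: "nat \<Rightarrow> real \<Rightarrow> (nat \<times> nat \<Rightarrow> bool) pmf" where
  "gnp N p = Pi_pmf (pairs N) False (\<lambda>_. bernoulli_pmf p)"

definition edges_ST :: "nat \<Rightarrow> (nat \<times> nat \<Rightarrow> bool) \<Rightarrow> nat set \<Rightarrow> nat set \<Rightarrow> nat" where
  "edges_ST N G S T = card {(i,j) \<in> pairs N. G (i,j) \<and> i \<in> S \<union> T \<and> j \<in> S \<union> T \<and> (i \<in> S \<or> j \<in> S)}"

end

theory Submission
  imports Defs "HOL-Real_Asymp.Real_Asymp"
begin

text \<open>
  A union bound over the at most (N choose n)^2 <= (eN/n)^(2n) pairs (S,T). For a fixed pair the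
  edge count is a sum of m <= 3n^2/2 independent Bernoulli(p) variables, so it reaches t with
  probability at most (m choose t) p^t <= (emp/t)^t. For t > 18n^2 p >= 12mp this is at most
  (e/12)^t <= exp(-7t/5), and the hypothesis on np gives t >= 3nL with L = ln(N/n) >= ln 3 >= 1.
  Hence the failure probability is at most exp(2n(L+1) - 21nL/5) <= exp(-n/5).
\<close>

lemma power_div_fact_le_exp:
  fixes x :: real
  assumes "0 \<le> x"
  shows "x ^ k / fact k \<le> exp x"
proof -
  have "summable (\<lambda>n. x ^ n /\<^sub>R fact n)"
    using exp_converges sums_summable by blast
  then have "(\<Sum>n\<in>{k}. x ^ n /\<^sub>R fact n) \<le> (\<Sum>n. x ^ n /\<^sub>R fact n)"
    by (rule sum_le_suminf) (use assms in auto)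
  also have "\<dots> = exp x"
    using exp_converges sums_unique by metis
  finally show ?thesis
    by (simp add: divide_inverse_commute)
qed

lemma inverse_fact_le_power: "1 / fact k \<le> (exp 1 / real k) ^ k"
proof (cases "k = 0")
  case False
  have "real k ^ k / fact k \<le> exp 1 ^ k"
    using power_div_fact_le_exp[of "real k" k] by (simp flip: exp_of_nat_mult)
  then show ?thesis
    using False by (simp add: field_simps)
qed simp

lemma binomial_le_power_div_fact: "real (m choose k) \<le> real m ^ k / fact k"
proof -
  have "real ((m choose k) * fact k) \<le> real (m ^ k)"
    by (rule of_nat_mono[OF binomial_fact_pow])
  then show ?thesis
    by (simp add: field_simps)
qed

lemma binomial_le_exp_power: "real (N choose n) \<le> (exp 1 * real N / real n) ^ n"
proof -
  have "real (N choose n) \<le> real N ^ n * (1 / fact n)"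
    using binomial_le_power_div_fact by simp
  also have "\<dots> \<le> real N ^ n * (exp 1 / real n) ^ n"
    by (intro mult_left_mono inverse_fact_le_power) simp
  also have "\<dots> = (exp 1 * real N / real n) ^ n"
    by (simp add: power_mult_distrib power_divide)
  finally show ?thesis .
qed

lemma exp_one_div_12_le: "exp 1 / 12 \<le> exp (- 7/5 :: real)"
proof -
  have "exp (12/5::real) ^ 5 = exp 1 ^ 12"
    by (simp flip: exp_of_nat_mult)
  also have "\<dots> \<le> (272/100) ^ 12"
    using e_less_272 by (intro power_mono) auto
  also have "\<dots> \<le> (12::real) ^ 5"
    by (simp add: power_divide divide_le_eq)
  finally have "exp (12/5::real) ^ Suc 4 \<le> 12 ^ Suc 4"
    by simp
  then have "exp (12/5::real) \<le> 12"
    by (rule power_le_imp_le_base) auto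
  then have "exp (12/5) * exp (- 7/5) \<le> 12 * exp (- 7/5 :: real)"
    by (rule mult_right_mono) simp
  then show ?thesis
    by (simp flip: exp_add)
qed

lemma prob_Pi_bernoulli_all_true:
  assumes "finite I" "A \<subseteq> I" "0 \<le> p" "p \<le> 1"
  shows "measure_pmf.prob (Pi_pmf I False (\<lambda>_. bernoulli_pmf p)) {G. \<forall>e\<in>A. G e} = p ^ card A"
proof -
  have "{G. \<forall>e\<in>A. G e} = Pi I (\<lambda>e. if e \<in> A then {True} else UNIV)"
    using assms(2) by (auto simp: Pi_def)
  then have "measure_pmf.prob (Pi_pmf I False (\<lambda>_. bernoulli_pmf p)) {G. \<forall>e\<in>A. G e}
      = (\<Prod>e\<in>I. if e \<in> A then p else 1)"
    using assms by (simp add: measure_Pi_pmf_Pi measure_pmf_single if_distrib cong: if_cong)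
  also have "\<dots> = p ^ card A"
    using assms(1,2) by (simp add: prod.If_cases Int_absorb1)
  finally show ?thesis .
qed

lemma prob_Pi_bernoulli_card_ge_le_binomial:
  assumes "finite I" "M \<subseteq> I" "0 \<le> p" "p \<le> 1"
  shows "measure_pmf.prob (Pi_pmf I False (\<lambda>_. bernoulli_pmf p)) {G. t \<le> card {e\<in>M. G e}}
          \<le> real (card M choose t) * p ^ t"
proof -
  let ?Q = "Pi_pmf I False (\<lambda>_. bernoulli_pmf p)"
  let ?X = "{A. A \<subseteq> M \<and> card A = t}"
  have "finite M"
    using assms finite_subset by blast
  have "{G. t \<le> card {e\<in>M. G e}} \<subseteq> (\<Union>A\<in>?X. {G. \<forall>e\<in>A. G e})"
  proof
    fix G
    assume "G \<in> {G. t \<le> card {e\<in>M. G e}}"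
    then obtain A where "A \<subseteq> {e\<in>M. G e}" "card A = t"
      by (auto elim: obtain_subset_with_card_n)
    then show "G \<in> (\<Union>A\<in>?X. {G. \<forall>e\<in>A. G e})"
      by auto
  qed
  then have "measure_pmf.prob ?Q {G. t \<le> card {e\<in>M. G e}}
      \<le> measure_pmf.prob ?Q (\<Union>A\<in>?X. {G. \<forall>e\<in>A. G e})"
    by (rule measure_pmf.finite_measure_mono) simp
  also have "\<dots> \<le> (\<Sum>A\<in>?X. measure_pmf.prob ?Q {G. \<forall>e\<in>A. G e})"
    by (rule measure_pmf.finite_measure_subadditive_finite) (use \<open>finite M\<close> in auto)
  also have "\<dots> = (\<Sum>A\<in>?X. p ^ t)"
    using assms by (intro sum.cong refl) (auto intro!: prob_Pi_bernoulli_all_true)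
  also have "\<dots> = real (card M choose t) * p ^ t"
    using n_subsets[OF \<open>finite M\<close>, of t] by simp
  finally show ?thesis .
qed

lemma prob_Pi_bernoulli_card_ge_le:
  assumes "finite I" "M \<subseteq> I" "0 \<le> p" "p \<le> 1"
  shows "measure_pmf.prob (Pi_pmf I False (\<lambda>_. bernoulli_pmf p)) {G. t \<le> card {e\<in>M. G e}}
          \<le> (exp 1 * real (card M) * p / real t) ^ t"
proof -
  have "measure_pmf.prob (Pi_pmf I False (\<lambda>_. bernoulli_pmf p)) {G. t \<le> card {e\<in>M. G e}}
          \<le> real (card M choose t) * p ^ t"
    by (rule prob_Pi_bernoulli_card_ge_le_binomial[OF assms])
  also have "\<dots> \<le> real (card M) ^ t / fact t * p ^ t"
    using assms by (intro mult_right_mono binomial_le_power_div_fact) auto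
  also have "\<dots> = (real (card M) * p) ^ t * (1 / fact t)"
    by (simp add: power_mult_distrib)
  also have "\<dots> \<le> (real (card M) * p) ^ t * (exp 1 / real t) ^ t"
    using assms by (intro mult_left_mono inverse_fact_le_power) auto
  also have "\<dots> = (exp 1 * real (card M) * p / real t) ^ t"
    by (simp add: power_mult_distrib power_divide)
  finally show ?thesis .
qed

definition ST_pairs :: "nat \<Rightarrow> nat set \<Rightarrow> nat set \<Rightarrow> (nat \<times> nat) set" where
  "ST_pairs N S T = {(i,j) \<in> pairs N. i \<in> S \<union> T \<and> j \<in> S \<union> T \<and> (i \<in> S \<or> j \<in> S)}"

definition disjoint_pairs :: "nat \<Rightarrow> nat \<Rightarrow> (nat set \<times> nat set) set" where
  "disjoint_pairs N n =
     {(S,T). S \<subseteq> {1..N} \<and> T \<subseteq> {1..N} \<and> S \<inter> T = {} \<and> card S = n \<and> card T = n}"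

definition sparse_graphs :: "nat \<Rightarrow> nat \<Rightarrow> real \<Rightarrow> (nat \<times> nat \<Rightarrow> bool) set" where
  "sparse_graphs N n p =
     {G. \<forall>S T. S \<subseteq> {1..N} \<and> T \<subseteq> {1..N} \<and> S \<inter> T = {} \<and> card S = n \<and> card T = n
           \<longrightarrow> real (edges_ST N G S T) \<le> 18 * (real n)^2 * p}"

lemma finite_pairs: "finite (pairs N)"
  by (rule finite_subset[of _ "{1..N} \<times> {1..N}"]) (auto simp: pairs_def)

lemma ST_pairs_subset_pairs: "ST_pairs N S T \<subseteq> pairs N"
  by (auto simp: ST_pairs_def)

lemma edges_ST_eq_card_ST_pairs: "edges_ST N G S T = card {e \<in> ST_pairs N S T. G e}"
  unfolding edges_ST_def ST_pairs_def by (intro arg_cong[where f = card]) auto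

lemma card_ST_pairs_le:
  assumes "finite S" "finite T" "S \<inter> T = {}"
  shows "2 * card (ST_pairs N S T) \<le> card S * (card S + 2 * card T)"
proof -
  let ?M = "ST_pairs N S T"
  let ?U = "(S \<union> T) \<times> (S \<union> T)"
  have "finite ?U"
    using assms by simp
  then have "finite ?M"
    by (rule finite_subset[rotated]) (auto simp: ST_pairs_def)
  \<comment> \<open>pairs are ordered (i < j), so M and its mirror image are disjoint subsets of (S \<union> T) \<times> (S \<union> T) - T \<times> T\<close>
  have "card ?M + card (prod.swap ` ?M) = card (?M \<union> prod.swap ` ?M)"
    using \<open>finite ?M\<close> by (intro card_Un_disjoint[symmetric]) (auto simp: ST_pairs_def pairs_def)
  also have "\<dots> \<le> card (?U - T \<times> T)"
    using assms \<open>finite ?U\<close> by (intro card_mono) (auto simp: ST_pairs_def)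
  also have "\<dots> = card ?U - card (T \<times> T)"
    using assms by (intro card_Diff_subset) auto
  also have "\<dots> = card S * (card S + 2 * card T)"
    using assms by (simp add: card_cartesian_product card_Un_disjoint algebra_simps)
  finally show ?thesis
    by (simp add: card_image)
qed

lemma prob_edges_ST_ge_le:
  assumes "finite S" "finite T" "S \<inter> T = {}" "card S = n" "card T = n" "0 \<le> p" "p \<le> 1"
  shows "measure_pmf.prob (gnp N p) {G. t \<le> edges_ST N G S T}
           \<le> (3 * exp 1 * real n ^ 2 * p / (2 * real t)) ^ t"
proof -
  have "2 * card (ST_pairs N S T) \<le> 3 * n ^ 2"
    using card_ST_pairs_le[OF assms(1-3)] assms(4,5) by (simp add: power2_eq_square algebra_simps)
  then have "real (card (ST_pairs N S T)) \<le> 3 * real n ^ 2 / 2"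
    by (simp add: field_simps flip: of_nat_mult of_nat_power of_nat_le_iff)
  then have "exp 1 * real (card (ST_pairs N S T)) * p / real t
      \<le> exp 1 * (3 * real n ^ 2 / 2) * p / real t"
    using assms(6) by (intro divide_right_mono mult_right_mono mult_left_mono) auto
  then have "(exp 1 * real (card (ST_pairs N S T)) * p / real t) ^ t
      \<le> (3 * exp 1 * real n ^ 2 * p / (2 * real t)) ^ t"
    using assms(6) by (intro power_mono) (auto simp: field_simps)
  then show ?thesis
    using prob_Pi_bernoulli_card_ge_le[OF finite_pairs ST_pairs_subset_pairs assms(6,7)]
    unfolding gnp_def edges_ST_eq_card_ST_pairs by (rule order_trans[rotated])
qed

lemma finite_disjoint_pairs: "finite (disjoint_pairs N n)"
  by (rule finite_subset[of _ "Pow {1..N} \<times> Pow {1..N}"]) (auto simp: disjoint_pairs_def)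

lemma card_disjoint_pairs_le: "card (disjoint_pairs N n) \<le> (N choose n) ^ 2"
proof -
  let ?Sub = "{S. S \<subseteq> {1..N} \<and> card S = n}"
  have "card (disjoint_pairs N n) \<le> card (?Sub \<times> ?Sub)"
    by (intro card_mono) (auto simp: disjoint_pairs_def)
  also have "\<dots> = (N choose n) ^ 2"
    using n_subsets[of "{1..N}" n] by (simp add: card_cartesian_product power2_eq_square)
  finally show ?thesis .
qed

lemma prob_exists_edges_ST_ge_le:
  assumes "0 \<le> p" "p \<le> 1" "t > 0" "18 * real n ^ 2 * p \<le> real t"
  shows "measure_pmf.prob (gnp N p) {G. \<exists>(S,T) \<in> disjoint_pairs N n. t \<le> edges_ST N G S T}
           \<le> real ((N choose n) ^ 2) * exp (- 7/5 * real t)"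
proof -
  let ?Q = "gnp N p"
  let ?E = "\<lambda>(S,T). {G. t \<le> edges_ST N G S T}"
  have "3 * exp 1 * real n ^ 2 * p / (2 * real t) \<le> exp 1 / 12"
    using assms by (simp add: field_simps)
  also have "\<dots> \<le> exp (- 7/5)"
    by (rule exp_one_div_12_le)
  finally have "(3 * exp 1 * real n ^ 2 * p / (2 * real t)) ^ t \<le> exp (- 7/5) ^ t"
    using assms(1) by (intro power_mono) auto
  also have "\<dots> = exp (- 7/5 * real t)"
    by (simp flip: exp_of_nat_mult add: mult.commute)
  finally have bound: "(3 * exp 1 * real n ^ 2 * p / (2 * real t)) ^ t \<le> exp (- 7/5 * real t)" .
  have single: "measure_pmf.prob ?Q (?E ST) \<le> exp (- 7/5 * real t)"
    if ST: "ST \<in> disjoint_pairs N n" for ST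
  proof -
    obtain S T where "ST = (S,T)" "S \<subseteq> {1..N}" "T \<subseteq> {1..N}" "S \<inter> T = {}" "card S = n" "card T = n"
      using ST by (cases ST) (auto simp: disjoint_pairs_def)
    then show ?thesis
      using prob_edges_ST_ge_le[of S T n p N t] assms(1,2) bound finite_subset[of _ "{1..N}"]
      by auto
  qed
  have "measure_pmf.prob ?Q {G. \<exists>(S,T) \<in> disjoint_pairs N n. t \<le> edges_ST N G S T}
      = measure_pmf.prob ?Q (\<Union>ST \<in> disjoint_pairs N n. ?E ST)"
    by (intro arg_cong[where f = "measure_pmf.prob ?Q"]) auto
  also have "\<dots> \<le> (\<Sum>ST \<in> disjoint_pairs N n. measure_pmf.prob ?Q (?E ST))"
    by (rule measure_pmf.finite_measure_subadditive_finite) (auto simp: finite_disjoint_pairs)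
  also have "\<dots> \<le> real (card (disjoint_pairs N n)) * exp (- 7/5 * real t)"
    using sum_bounded_above[of "disjoint_pairs N n", OF single] by simp
  also have "\<dots> \<le> real ((N choose n) ^ 2) * exp (- 7/5 * real t)"
    using card_disjoint_pairs_le by (intro mult_right_mono) auto
  finally show ?thesis .
qed

lemma binomial_sq_mult_exp_le:
  assumes "n > 0" "3 * n \<le> N" "3 * real n * ln (real N / real n) \<le> t"
  shows "real ((N choose n) ^ 2) * exp (- 7/5 * t) \<le> exp (- real n / 5)"
proof -
  define L where "L = ln (real N / real n)"
  have ratio: "3 \<le> real N / real n"
    using assms(1,2) by (simp add: field_simps)
  then have "1 \<le> L"
    using ln3_gt_1 ln_le_cancel_iff[of 3 "real N / real n"] unfolding L_def by linarith
  have "exp 1 * real N / real n = exp (L + 1)"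
    using ratio by (simp add: L_def exp_add)
  then have "real (N choose n) \<le> exp (real n * (L + 1))"
    using binomial_le_exp_power[of N n] by (simp add: exp_of_nat_mult)
  then have "real ((N choose n) ^ 2) \<le> exp (real n * (L + 1)) ^ 2"
    by (simp add: power_mono)
  also have "\<dots> = exp (2 * real n * (L + 1))"
    by (simp flip: exp_of_nat_mult add: mult_ac)
  finally have "real ((N choose n) ^ 2) * exp (- 7/5 * t)
      \<le> exp (2 * real n * (L + 1)) * exp (- 7/5 * (3 * real n * L))"
    using assms(3) unfolding L_def by (intro mult_mono) auto
  also have "\<dots> = exp (real n * (2 - 11/5 * L))"
    by (simp flip: exp_add add: algebra_simps)
  also have "\<dots> \<le> exp (real n * (- 1/5))"
    using \<open>1 \<le> L\<close> by (intro exp_mono mult_left_mono) auto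
  finally show ?thesis
    by simp
qed

lemma prob_not_sparse_graphs_le:
  assumes "0 \<le> p" "p \<le> 1" "n > 0"
    and "ln (real N / real n) / 6 \<le> real n * p" "3 * n \<le> N"
  shows "measure_pmf.prob (gnp N p) (- sparse_graphs N n p) \<le> exp (- real n / 5)"
proof -
  define t where "t = nat \<lfloor>18 * real n ^ 2 * p\<rfloor> + 1"
  have nonneg: "0 \<le> 18 * real n ^ 2 * p"
    using assms(1) by simp
  then have t: "t > 0" "18 * real n ^ 2 * p \<le> real t"
    unfolding t_def by linarith+
  have "- sparse_graphs N n p \<subseteq> {G. \<exists>(S,T) \<in> disjoint_pairs N n. t \<le> edges_ST N G S T}"
  proof
    fix G
    assume "G \<in> - sparse_graphs N n p"
    then obtain S T where "(S,T) \<in> disjoint_pairs N n" "18 * real n ^ 2 * p < real (edges_ST N G S T)"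
      by (auto simp: sparse_graphs_def disjoint_pairs_def not_le)
    moreover have "t \<le> edges_ST N G S T"
      using calculation(2) nonneg unfolding t_def by linarith
    ultimately show "G \<in> {G. \<exists>(S,T) \<in> disjoint_pairs N n. t \<le> edges_ST N G S T}"
      by blast
  qed
  then have "measure_pmf.prob (gnp N p) (- sparse_graphs N n p)
      \<le> measure_pmf.prob (gnp N p) {G. \<exists>(S,T) \<in> disjoint_pairs N n. t \<le> edges_ST N G S T}"
    by (rule measure_pmf.finite_measure_mono) simp
  also have "\<dots> \<le> real ((N choose n) ^ 2) * exp (- 7/5 * real t)"
    using prob_exists_edges_ST_ge_le[OF assms(1,2) t] .
  also have "\<dots> \<le> exp (- real n / 5)"
  proof (rule binomial_sq_mult_exp_le[OF assms(3,5)])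
    have "18 * real n * (ln (real N / real n) / 6) \<le> 18 * real n * (real n * p)"
      using assms(4) by (intro mult_left_mono) auto
    then show "3 * real n * ln (real N / real n) \<le> real t"
      using t(2) by (simp add: power2_eq_square mult_ac)
  qed
  finally show ?thesis .
qed

lemma prob_sparse_graphs_ge:
  assumes "0 \<le> p" "p \<le> 1" "n > 0"
    and "ln (real N / real n) / 6 \<le> real n * p" "3 * n \<le> N"
  shows "1 - exp (- real n / 5) \<le> measure_pmf.prob (gnp N p) (sparse_graphs N n p)"
proof -
  have "measure_pmf.prob (gnp N p) (sparse_graphs N n p)
      = 1 - measure_pmf.prob (gnp N p) (- sparse_graphs N n p)"
    using measure_pmf.prob_compl[of "- sparse_graphs N n p" "gnp N p"] by (simp add: Compl_eq_Diff_UNIV Diff_Diff_Int)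
  then show ?thesis
    using prob_not_sparse_graphs_le[OF assms] by simp
qed

theorem lemma2p5:
  fixes N :: "nat \<Rightarrow> nat" and p :: "nat \<Rightarrow> real"
  assumes p_prob: "\<And>n. 0 \<le> p n \<and> p n \<le> 1"
    and hyp: "eventually (\<lambda>n. real n * p n \<ge> ln (real (N n) / real n) / 6 \<and> N n \<ge> 3 * n) sequentially"
  shows "(\<lambda>n. measure_pmf.prob (gnp (N n) (p n))
            {G. \<forall>S T. S \<subseteq> {1..N n} \<and> T \<subseteq> {1..N n} \<and> S \<inter> T = {} \<and> card S = n \<and> card T = n
                  \<longrightarrow> real (edges_ST (N n) G S T) \<le> 18 * (real n)^2 * p n})
         \<longlonglongrightarrow> 1"
  unfolding sparse_graphs_def[symmetric]
proof (rule tendsto_sandwich[where f = "\<lambda>n. 1 - exp (- real n / 5)" and h = "\<lambda>n. 1"])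
  show "\<forall>\<^sub>F n in sequentially.
          1 - exp (- real n / 5) \<le> measure_pmf.prob (gnp (N n) (p n)) (sparse_graphs (N n) n (p n))"
    using hyp eventually_gt_at_top[of 0]
    by eventually_elim (use p_prob prob_sparse_graphs_ge in auto)
  show "\<forall>\<^sub>F n in sequentially. measure_pmf.prob (gnp (N n) (p n)) (sparse_graphs (N n) n (p n)) \<le> 1"
    by (simp add: measure_pmf.prob_le_1)
  show "(\<lambda>n. 1 - exp (- real n / 5)) \<longlonglongrightarrow> 1"
    by real_asymp
qed simp

end
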